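(* Suppose the empirical measures $\mathbb P_t$ converge weakly to an absolutely continuous probability measure $\mathbb P$ on $\mathcal S$. Then for every $\pi\in\mathcal{FG}$ the asymptotic growth rate $W(\pi)=\lim_{t\to\infty}\frac1t\log V_\pi(t)$ exists and $W(\pi)=\lim_{t\to\infty}\int_{\mathcal S}\ell_\pi\,d\mathbb P_t=\int_{\mathcal S}\ell_\pi\,d\mathbb P$.
   Context: $n\ge2$; $\Delta_n$, $\overline{\Delta}_n$ open and closed unit simplices in $\mathbb R^n$. Market: $\{\mu(t)\}_{t\ge0}\subset\Delta_n$ with a constant $M>0$ such that $\frac1M\le\mu_i(t+1)/\mu_i(t)\le M$ for all $i,t$; $\mathcal S=\{(p,q)\in\Delta_n\times\Delta_n:\frac1M\le q_i/p_i\le M\ \forall i\}$. Relative value: $V_\pi(0)=1$, $V_\pi(t+1)=V_\pi(t)\sum_i\pi_i(\mu(t))\mu_i(t+1)/\mu_i(t)$. $\mathbb P_t=\frac1t\sum_{s=0}^{t-1}\delta_{(\mu(s),\mu(s+1))}$; $\ell_\pi(p,q)=\log\left(\sum_i\pi_i(p)q_i/p_i\right)$. Absolute continuity is with respect to Lebesgue measure. $\mathcal{FG}$ is the set of maps $\pi:\Delta_n\to\overline{\Delta}_n$ for which there is a concave $\Phi:\Delta_n\to(0,\infty)$ with $\sum_i\pi_i(p)\frac{q_i}{p_i}\ge\frac{\Phi(q)}{\Phi(p)}$ for all $p,q$. *)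

theory Defs
  imports "HOL-Probability.Probability"
begin

definition open_simplex :: "(real ^ 'n) set" where
  "open_simplex = {p. (\<forall>i. p $ i > 0) \<and> (\<Sum>i\<in>UNIV. p $ i) = 1}"

definition closed_simplex :: "(real ^ 'n) set" where
  "closed_simplex = {p. (\<forall>i. p $ i \<ge> 0) \<and> (\<Sum>i\<in>UNIV. p $ i) = 1}"

definition S_set :: "real \<Rightarrow> ((real ^ 'n) \<times> (real ^ 'n)) set" where
  "S_set M = {(p, q). p \<in> open_simplex \<and> q \<in> open_simplex \<and>
                (\<forall>i. 1 / M \<le> q $ i / p $ i \<and> q $ i / p $ i \<le> M)}"

primrec rel_value :: "(real ^ 'n \<Rightarrow> real ^ 'n) \<Rightarrow> (nat \<Rightarrow> real ^ 'n) \<Rightarrow> nat \<Rightarrow> real" where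
  "rel_value \<pi> \<mu> 0 = 1"
| "rel_value \<pi> \<mu> (Suc t) =
     rel_value \<pi> \<mu> t * (\<Sum>i\<in>UNIV. \<pi> (\<mu> t) $ i * \<mu> (Suc t) $ i / \<mu> t $ i)"

definition ell :: "(real ^ 'n \<Rightarrow> real ^ 'n) \<Rightarrow> (real ^ 'n) \<times> (real ^ 'n) \<Rightarrow> real" where
  "ell \<pi> x = ln (\<Sum>i\<in>UNIV. \<pi> (fst x) $ i * snd x $ i / fst x $ i)"

definition emp_measure :: "(nat \<Rightarrow> real ^ 'n) \<Rightarrow> nat \<Rightarrow> ((real ^ 'n) \<times> (real ^ 'n)) measure" where
  "emp_measure \<mu> t = measure_pmf (map_pmf (\<lambda>s. (\<mu> s, \<mu> (Suc s))) (pmf_of_set {..<t}))"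

definition weak_conv_on :: "'a::metric_space set \<Rightarrow> (nat \<Rightarrow> 'a measure) \<Rightarrow> 'a measure \<Rightarrow> bool" where
  "weak_conv_on S Pt P \<longleftrightarrow>
     (\<forall>f :: 'a \<Rightarrow> real. continuous_on S f \<and> bounded (f ` S) \<longrightarrow>
        (\<lambda>t. set_lebesgue_integral (Pt t) S f) \<longlonglongrightarrow> set_lebesgue_integral P S f)"

text \<open>Absolute continuity w.r.t. Lebesgue measure on (the affine hull of) the product of
  simplices, of dimension 2(n-1). A Borel set A inside Delta x Delta is Lebesgue-null in this
  sense iff its thickening along the all-ones directions,
  {(p + s 1, q + r 1) : (p,q) in A, s,r in [0,1]}, is Lebesgue-null in R^(2n).\<close>
definition ones_vec :: "real ^ 'n" where
  "ones_vec = (\<chi> i. 1)"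

definition thicken :: "((real ^ 'n) \<times> (real ^ 'n)) set \<Rightarrow> ((real ^ 'n) \<times> (real ^ 'n)) set" where
  "thicken A = (\<lambda>((p, q), (s, r)). (p + s *\<^sub>R ones_vec, q + r *\<^sub>R ones_vec)) `
                  (A \<times> ({0..1} \<times> {0..1}))"

definition simplex_abs_cont :: "((real ^ 'n) \<times> (real ^ 'n)) measure \<Rightarrow> bool" where
  "simplex_abs_cont P \<longleftrightarrow>
     (\<forall>A \<in> sets borel. A \<subseteq> open_simplex \<times> open_simplex \<longrightarrow>
        thicken A \<in> null_sets lebesgue \<longrightarrow> emeasure P A = 0)"

definition FG :: "(real ^ 'n \<Rightarrow> real ^ 'n) set" where
  "FG = {\<pi>. (\<forall>p\<in>open_simplex. \<pi> p \<in> closed_simplex) \<and>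
            (\<exists>\<Phi>. concave_on open_simplex \<Phi> \<and> (\<forall>p\<in>open_simplex. \<Phi> p > 0) \<and>
               (\<forall>p\<in>open_simplex. \<forall>q\<in>open_simplex.
                  (\<Sum>i\<in>UNIV. \<pi> p $ i * q $ i / p $ i) \<ge> \<Phi> q / \<Phi> p))}"

end

theory Submission
  imports Defs
begin

text \<open>The empirical measure \<open>P\<^sub>t\<close> is uniform on the steps \<open>(\<mu> s, \<mu> (s + 1))\<close>, \<open>s < t\<close>, so
  the integral of \<open>ell \<pi>\<close> against it is \<open>ln V\<^sub>\<pi>(t) / t\<close>; moreover \<open>\<bar>ell \<pi>\<bar> \<le> ln M\<close> on \<open>S\<close>.
  Weak convergence extends from continuous functions to bounded functions that are continuous
  \<open>P\<close>-almost everywhere, by squeezing them between Lipschitz majorants and minorants. So it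
  suffices that \<open>ell \<pi>\<close> is continuous off a \<open>P\<close>-null set.

  The defining inequality \<open>\<Sum>\<^sub>i \<pi>\<^sub>i(p') q\<^sub>i / p'\<^sub>i \<ge> \<Phi>(q) / \<Phi>(p')\<close>, applied to points of the line
  through \<open>p\<close> and \<open>q\<close>, traps the growth factor at \<open>(p', q)\<close> between difference quotients of the
  concave function \<open>\<Phi>\<close> at \<open>p\<close> in direction \<open>q - p\<close>, for every base point \<open>p'\<close> near \<open>p\<close>. Hence
  \<open>ell \<pi>\<close> is continuous at \<open>(p, q)\<close> unless the two one-sided derivatives of \<open>\<Phi>\<close> there differ.
  By concavity such kinks are countable on every line \<open>t \<mapsto> (c + t d, c + t d + d)\<close>, so by
  Fubini the kink set, thickened along the all-ones directions, is Lebesgue-null, and absolute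
  continuity makes it \<open>P\<close>-null.\<close>

section \<open>Weak convergence for almost everywhere continuous functions\<close>

definition lipschitz_majorant :: "('a::metric_space \<Rightarrow> real) \<Rightarrow> 'a set \<Rightarrow> nat \<Rightarrow> 'a \<Rightarrow> real" where
  "lipschitz_majorant f S k x = (SUP y\<in>S. f y - real k * dist x y)"

context
  fixes f :: "'a::metric_space \<Rightarrow> real" and S :: "'a set" and C :: real
  assumes S_ne: "S \<noteq> {}" and f_bounded: "\<And>x. x \<in> S \<Longrightarrow> \<bar>f x\<bar> \<le> C"
begin

lemma lipschitz_majorant_upper:
  assumes "y \<in> S"
  shows "f y - real k * dist x y \<le> lipschitz_majorant f S k x"
proof -
  have "bdd_above ((\<lambda>y. f y - real k * dist x y) ` S)"
    using f_bounded by (intro bdd_aboveI2[where M=C]) (smt (verit) of_nat_0_le_iff zero_le_dist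
        mult_nonneg_nonneg)
  then show ?thesis
    unfolding lipschitz_majorant_def using assms by (rule cSUP_upper2) simp
qed

lemma lipschitz_majorant_le: "lipschitz_majorant f S k x \<le> C"
  unfolding lipschitz_majorant_def
proof (rule cSUP_least[OF S_ne])
  fix y assume "y \<in> S"
  then show "f y - real k * dist x y \<le> C"
    using f_bounded[of y] by (smt (verit) of_nat_0_le_iff zero_le_dist mult_nonneg_nonneg)
qed

lemma lipschitz_majorant_ge: "x \<in> S \<Longrightarrow> f x \<le> lipschitz_majorant f S k x"
  using lipschitz_majorant_upper[of x k x] by simp

lemma lipschitz_majorant_lipschitz:
  "(real k)-lipschitz_on UNIV (lipschitz_majorant f S k)"
proof -
  have le: "lipschitz_majorant f S k x \<le> lipschitz_majorant f S k x' + real k * dist x x'" for x x'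
    unfolding lipschitz_majorant_def[of f S k x]
  proof (rule cSUP_least[OF S_ne])
    fix y assume "y \<in> S"
    have "real k * dist x' y \<le> real k * dist x y + real k * dist x x'"
      by (metis dist_commute dist_triangle distrib_left mult_left_mono of_nat_0_le_iff)
    with lipschitz_majorant_upper[OF \<open>y \<in> S\<close>, of k x']
    show "f y - real k * dist x y \<le> lipschitz_majorant f S k x' + real k * dist x x'"
      by linarith
  qed
  show ?thesis
  proof (rule lipschitz_onI)
    fix x y
    show "dist (lipschitz_majorant f S k x) (lipschitz_majorant f S k y) \<le> real k * dist x y"
      using le[of x y] le[of y x] by (simp add: dist_real_def dist_commute abs_le_iff)
  qed simp
qed

lemma continuous_on_lipschitz_majorant: "continuous_on A (lipschitz_majorant f S k)"
  using lipschitz_on_continuous_on[OF lipschitz_majorant_lipschitz] continuous_on_subset by blast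

lemma lipschitz_majorant_le_near:
  assumes x: "x \<in> S" and e: "e > 0" and d: "\<And>y. y \<in> S \<Longrightarrow> dist y x < d \<Longrightarrow> f y < f x + e"
    and k: "2 * C \<le> real k * d"
  shows "lipschitz_majorant f S k x \<le> f x + e"
  unfolding lipschitz_majorant_def
proof (rule cSUP_least[OF S_ne])
  fix y assume y: "y \<in> S"
  show "f y - real k * dist x y \<le> f x + e"
  proof (cases "dist y x < d")
    case True
    then have "f y < f x + e" using d[OF y] by simp
    moreover have "0 \<le> real k * dist x y" by simp
    ultimately show ?thesis by linarith
  next
    \<comment> \<open>far from \<open>x\<close>, the penalty \<open>k * dist x y\<close> beats the oscillation \<open>2 * C\<close> of \<open>f\<close>\<close>
    case False
    then have "real k * d \<le> real k * dist x y" by (simp add: dist_commute mult_left_mono)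
    then show ?thesis using f_bounded[OF y] f_bounded[OF x] k e by linarith
  qed
qed

lemma lipschitz_majorant_tendsto:
  assumes x: "x \<in> S" and cont: "continuous (at x within S) f"
  shows "(\<lambda>k. lipschitz_majorant f S k x) \<longlonglongrightarrow> f x"
proof (rule order_tendstoI)
  fix a assume "a < f x"
  then have "a < lipschitz_majorant f S k x" for k
    using lipschitz_majorant_ge[OF x] less_le_trans by blast
  then show "eventually (\<lambda>k. a < lipschitz_majorant f S k x) sequentially"
    by simp
next
  fix a assume "f x < a"
  define e where "e = (a - f x) / 2"
  have e: "e > 0" using \<open>f x < a\<close> by (simp add: e_def)
  obtain d where d: "d > 0" "\<And>y. y \<in> S \<Longrightarrow> dist y x < d \<Longrightarrow> dist (f y) (f x) < e"
    using cont e unfolding continuous_within_eps_delta by metis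
  then have near: "\<And>y. y \<in> S \<Longrightarrow> dist y x < d \<Longrightarrow> f y < f x + e"
    by (force simp: dist_real_def abs_less_iff)
  obtain N :: nat where N: "2 * C / d < real N" using reals_Archimedean2 by blast
  have "lipschitz_majorant f S k x < a" if "N \<le> k" for k
  proof -
    have "2 * C / d < real k" using N that by (meson of_nat_le_iff less_le_trans)
    then have "2 * C \<le> real k * d" using d(1) by (simp add: pos_divide_less_eq)
    with x e near have "lipschitz_majorant f S k x \<le> f x + e"
      by (rule lipschitz_majorant_le_near)
    then show ?thesis using \<open>f x < a\<close> unfolding e_def by argo
  qed
  then show "eventually (\<lambda>k. lipschitz_majorant f S k x < a) sequentially"
    by (auto simp: eventually_sequentially)
qed

end

definition lipschitz_minorant :: "('a::metric_space \<Rightarrow> real) \<Rightarrow> 'a set \<Rightarrow> nat \<Rightarrow> 'a \<Rightarrow> real" where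
  "lipschitz_minorant f S k x = - lipschitz_majorant (\<lambda>x. - f x) S k x"

lemma lipschitz_approximations:
  fixes f :: "'a::metric_space \<Rightarrow> real"
  assumes S_ne: "S \<noteq> {}" and f_bounded: "\<And>x. x \<in> S \<Longrightarrow> \<bar>f x\<bar> \<le> C"
  shows "continuous_on A (lipschitz_majorant f S k)" "continuous_on A (lipschitz_minorant f S k)"
    and "x \<in> S \<Longrightarrow> lipschitz_minorant f S k x \<le> f x \<and> f x \<le> lipschitz_majorant f S k x"
    and "x \<in> S \<Longrightarrow> \<bar>lipschitz_majorant f S k x\<bar> \<le> C \<and> \<bar>lipschitz_minorant f S k x\<bar> \<le> C"
    and "x \<in> S \<Longrightarrow> continuous (at x within S) f \<Longrightarrow>
      (\<lambda>k. lipschitz_majorant f S k x) \<longlonglongrightarrow> f x \<and> (\<lambda>k. lipschitz_minorant f S k x) \<longlonglongrightarrow> f x"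
proof -
  have mf_bounded: "\<And>x. x \<in> S \<Longrightarrow> \<bar>- f x\<bar> \<le> C" using f_bounded by simp
  note upper = lipschitz_majorant_ge[where f = f and S = S and C = C, OF S_ne f_bounded]
    lipschitz_majorant_le[where f = f and S = S and C = C, OF S_ne f_bounded]
  note lower = lipschitz_majorant_ge[where f = "\<lambda>x. - f x" and S = S and C = C, OF S_ne mf_bounded]
    lipschitz_majorant_le[where f = "\<lambda>x. - f x" and S = S and C = C, OF S_ne mf_bounded]
  show "continuous_on A (lipschitz_majorant f S k)" "continuous_on A (lipschitz_minorant f S k)"
    unfolding lipschitz_minorant_def[abs_def]
    by (auto intro!: continuous_intros
        continuous_on_lipschitz_majorant[where f = f and S = S and C = C, OF S_ne f_bounded]
        continuous_on_lipschitz_majorant[where f = "\<lambda>x. - f x" and S = S and C = C,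
          OF S_ne mf_bounded])
  show "x \<in> S \<Longrightarrow> lipschitz_minorant f S k x \<le> f x \<and> f x \<le> lipschitz_majorant f S k x"
    using upper(1)[of x k] lower(1)[of x k] by (simp add: lipschitz_minorant_def)
  show "x \<in> S \<Longrightarrow> \<bar>lipschitz_majorant f S k x\<bar> \<le> C \<and> \<bar>lipschitz_minorant f S k x\<bar> \<le> C"
    using upper(1)[of x k] upper(2)[of k x] lower(1)[of x k] lower(2)[of k x] f_bounded[of x]
    by (auto simp: lipschitz_minorant_def abs_le_iff)
  assume x: "x \<in> S" and cont: "continuous (at x within S) f"
  then have "continuous (at x within S) (\<lambda>x. - f x)" by (intro continuous_intros)
  from tendsto_minus[OF lipschitz_majorant_tendsto[OF S_ne mf_bounded x this]]
    lipschitz_majorant_tendsto[OF S_ne f_bounded x cont]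
  show "(\<lambda>k. lipschitz_majorant f S k x) \<longlonglongrightarrow> f x \<and> (\<lambda>k. lipschitz_minorant f S k x) \<longlonglongrightarrow> f x"
    by (simp add: lipschitz_minorant_def)
qed

lemma borel_measurable_completion_AE_eq:
  fixes f g :: "'a \<Rightarrow> real"
  assumes g: "g \<in> borel_measurable M" and ae: "AE x in M. f x = g x"
  shows "f \<in> borel_measurable (completion M)"
proof (rule borel_measurableI)
  fix U :: "real set" assume "open U"
  have A: "g -` U \<inter> space (completion M) \<in> sets (completion M)"
    using g \<open>open U\<close> by (simp add: measurable_sets borel_open)
  have "AE x in completion M. x \<in> g -` U \<inter> space (completion M) \<longleftrightarrow> x \<in> f -` U \<inter> space (completion M)"
    using AE_completion[OF ae] by eventually_elim auto
  then show "f -` U \<inter> space (completion M) \<in> sets (completion M)"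
    by (rule completion.in_sets_AE[OF _ A]) auto
qed

lemma tendsto_sandwich_approximations:
  fixes x :: "nat \<Rightarrow> real"
  assumes between: "\<And>k. eventually (\<lambda>t. l k t \<le> x t \<and> x t \<le> u k t) sequentially"
    and l: "\<And>k. l k \<longlonglongrightarrow> L k" and u: "\<And>k. u k \<longlonglongrightarrow> U k"
    and L: "L \<longlonglongrightarrow> I" and U: "U \<longlonglongrightarrow> I"
  shows "x \<longlonglongrightarrow> I"
proof (rule order_tendstoI)
  fix a assume "a < I"
  then obtain k where "a < L k"
    using order_tendstoD(1)[OF L] by (metis eventually_sequentially order_refl)
  from order_tendstoD(1)[OF l this] between[of k]
  show "eventually (\<lambda>t. a < x t) sequentially"
    by eventually_elim auto
next
  fix a assume "I < a"
  then obtain k where "U k < a"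
    using order_tendstoD(2)[OF U] by (metis eventually_sequentially order_refl)
  from order_tendstoD(2)[OF u this] between[of k]
  show "eventually (\<lambda>t. x t < a) sequentially"
    by eventually_elim auto
qed

lemma set_integral_tendsto_AE_limit:
  fixes f :: "'a::metric_space \<Rightarrow> real" and g :: "nat \<Rightarrow> 'a \<Rightarrow> real"
  assumes S: "S \<in> sets borel" and P: "sets P = sets borel" "finite_measure P"
    and g_cont: "\<And>k. continuous_on S (g k)" and g_bounded: "\<And>k x. x \<in> S \<Longrightarrow> \<bar>g k x\<bar> \<le> C"
    and lim: "AE x in P. x \<in> S \<longrightarrow> (\<lambda>k. g k x) \<longlonglongrightarrow> f x"
  shows "set_integrable (completion P) S f"
    and "(\<lambda>k. set_lebesgue_integral P S (g k)) \<longlonglongrightarrow> set_lebesgue_integral (completion P) S f"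
proof -
  define G where "G k x = indicator S x * g k x" for k x
  define F where "F x = indicator S x * f x" for x
  have G_meas: "G k \<in> borel_measurable P" for k
    unfolding G_def using borel_measurable_continuous_on_indicator[OF S g_cont[of k]]
    by (simp add: measurable_cong_sets[OF P(1) refl])
  have G_lim: "AE x in P. (\<lambda>k. G k x) \<longlonglongrightarrow> F x"
    using lim by eventually_elim (auto simp: G_def F_def indicator_def)
  have "AE x in P. F x = lim (\<lambda>k. G k x)"
    using G_lim by eventually_elim (simp add: limI)
  then have F_meas: "F \<in> borel_measurable (completion P)"
    by (intro borel_measurable_completion_AE_eq[of "\<lambda>x. lim (\<lambda>k. G k x)"])
      (use G_meas in measurable)
  have G_dom: "AE x in completion P. norm (G k x) \<le> \<bar>C\<bar>" for k
    using g_bounded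
    by (intro AE_I2) (auto simp: G_def indicator_def intro: order_trans[OF g_bounded abs_ge_self])
  have "finite_measure (completion P)"
    using P(2) by (intro finite_measureI) (simp add: finite_measure.emeasure_finite)
  then have C_int: "integrable (completion P) (\<lambda>_. \<bar>C\<bar>)"
    by (rule finite_measure.integrable_const)
  note dominated = measurable_completion[OF G_meas] C_int AE_completion[OF G_lim] G_dom
  show "set_integrable (completion P) S f"
    using integrable_dominated_convergence[OF F_meas dominated]
    by (simp add: set_integrable_def F_def)
  show "(\<lambda>k. set_lebesgue_integral P S (g k)) \<longlonglongrightarrow> set_lebesgue_integral (completion P) S f"
    using integral_dominated_convergence[OF F_meas dominated]
    by (simp add: set_lebesgue_integral_def G_def F_def
        integral_completion[OF G_meas, unfolded G_def])
qed

lemma weak_conv_on_AE_continuous: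
  fixes f :: "'a::metric_space \<Rightarrow> real" and Pt :: "nat \<Rightarrow> 'a measure"
  assumes weak: "weak_conv_on S Pt P"
    and S: "S \<in> sets borel" and P: "sets P = sets borel" "finite_measure P"
    and f_bounded: "\<And>x. x \<in> S \<Longrightarrow> \<bar>f x\<bar> \<le> C"
    and cont: "AE x in P. x \<in> S \<longrightarrow> continuous (at x within S) f"
    and Pt_integrable: "eventually (\<lambda>t. \<forall>h::'a \<Rightarrow> real. integrable (Pt t) h) sequentially"
  shows "set_integrable (completion P) S f" (is ?integrable)
    and "(\<lambda>t. set_lebesgue_integral (Pt t) S f) \<longlonglongrightarrow> set_lebesgue_integral (completion P) S f"
      (is ?convergent)
proof -
  have "?integrable \<and> ?convergent" if "S = {}"
    using that by (simp add: set_integrable_def set_lebesgue_integral_def)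
  moreover have "?integrable \<and> ?convergent" if S_ne: "S \<noteq> {}"
  proof -
    note approx = lipschitz_approximations[where f = f and S = S and C = C, OF S_ne f_bounded]
    have weak_lim: "(\<lambda>t. set_lebesgue_integral (Pt t) S g) \<longlonglongrightarrow> set_lebesgue_integral P S g"
      if "continuous_on S g" "\<And>x. x \<in> S \<Longrightarrow> \<bar>g x\<bar> \<le> C" for g
      using weak that by (auto simp: weak_conv_on_def intro!: boundedI[where B=C])
    have upper: "set_integrable (completion P) S f \<and> (\<lambda>k. set_lebesgue_integral P S
        (lipschitz_majorant f S k)) \<longlonglongrightarrow> set_lebesgue_integral (completion P) S f"
      using cont approx
      by (intro conjI set_integral_tendsto_AE_limit[OF S P, where g = "lipschitz_majorant f S"
            and C = C]) (auto elim!: AE_mp)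
    have lower: "(\<lambda>k. set_lebesgue_integral P S (lipschitz_minorant f S k))
        \<longlonglongrightarrow> set_lebesgue_integral (completion P) S f"
      using cont approx
      by (intro set_integral_tendsto_AE_limit(2)[OF S P, where g = "lipschitz_minorant f S"
            and C = C]) (auto elim!: AE_mp)
    have between: "eventually (\<lambda>t.
        set_lebesgue_integral (Pt t) S (lipschitz_minorant f S k) \<le> set_lebesgue_integral (Pt t) S f
      \<and> set_lebesgue_integral (Pt t) S f
        \<le> set_lebesgue_integral (Pt t) S (lipschitz_majorant f S k)) sequentially" for k
      using Pt_integrable
      by eventually_elim
        (use approx(3) in \<open>auto simp: set_lebesgue_integral_def indicator_def
          intro!: integral_mono\<close>)
    have ?convergent
      by (rule tendsto_sandwich_approximations[OF between weak_lim weak_lim lower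
            conjunct2[OF upper]]) (use approx in auto)
    with upper show ?thesis by blast
  qed
  ultimately show ?integrable ?convergent by blast+
qed

section \<open>The open simplex and the one-step growth factor\<close>

definition coord_sum :: "real ^ 'n \<Rightarrow> real" where
  "coord_sum x = (\<Sum>i\<in>UNIV. x $ i)"

definition pos_orthant :: "(real ^ 'n) set" where
  "pos_orthant = {x. \<forall>i. 0 < x $ i}"

lemma coord_sum_add: "coord_sum (x + y) = coord_sum x + coord_sum y"
  by (simp add: coord_sum_def sum.distrib)

lemma coord_sum_diff: "coord_sum (x - y) = coord_sum x - coord_sum y"
  by (simp add: coord_sum_def sum_subtractf)

lemma coord_sum_scaleR: "coord_sum (c *\<^sub>R x) = c * coord_sum x"
  by (simp add: coord_sum_def sum_distrib_left)

lemma coord_sum_ones_vec: "coord_sum (ones_vec :: real ^ 'n) = real CARD('n)"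
  by (simp add: coord_sum_def ones_vec_def)

lemma coord_sum_pos: "x \<in> pos_orthant \<Longrightarrow> coord_sum x > 0"
  unfolding coord_sum_def pos_orthant_def by (intro sum_pos) auto

lemma open_simplex_iff: "p \<in> open_simplex \<longleftrightarrow> p \<in> pos_orthant \<and> coord_sum p = 1"
  by (simp add: open_simplex_def pos_orthant_def coord_sum_def)

lemma pos_orthant_eq_INT: "(pos_orthant :: (real ^ 'n) set) = (\<Inter>i. {x. 0 < inner (axis i 1) x})"
  by (auto simp: pos_orthant_def inner_axis')

lemma open_pos_orthant: "open (pos_orthant :: (real ^ 'n) set)"
  unfolding pos_orthant_eq_INT by (intro open_INT ballI open_halfspace_gt) auto

lemma convex_pos_orthant: "convex (pos_orthant :: (real ^ 'n) set)"
  unfolding pos_orthant_eq_INT by (intro convex_INT convex_halfspace_gt)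

lemma normalize_in_open_simplex: "x \<in> pos_orthant \<Longrightarrow> (1 / coord_sum x) *\<^sub>R x \<in> open_simplex"
  using coord_sum_pos[of x]
  by (simp add: open_simplex_iff coord_sum_scaleR pos_orthant_def)

lemma concave_on_homogeneous_extension:
  fixes \<Phi> :: "real ^ 'n \<Rightarrow> real"
  assumes concave: "concave_on open_simplex \<Phi>"
  shows "concave_on pos_orthant (\<lambda>x. coord_sum x * \<Phi> ((1 / coord_sum x) *\<^sub>R x))"
  unfolding concave_on_iff
proof (intro conjI convex_pos_orthant ballI allI impI)
  fix x y :: "real ^ 'n" and u v :: real
  assume x: "x \<in> pos_orthant" and y: "y \<in> pos_orthant"
    and u: "0 \<le> u" and v: "0 \<le> v" and uv: "u + v = 1"
  define a b where "a = coord_sum x" and "b = coord_sum y"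
  have a: "a > 0" and b: "b > 0"
    using coord_sum_pos[OF x] coord_sum_pos[OF y] by (auto simp: a_def b_def)
  define c where "c = u * a + v * b"
  have c: "c > 0"
    using a b u v uv unfolding c_def by (smt (verit) mult_nonneg_nonneg mult_pos_pos)
  have eq: "(1 / c) *\<^sub>R (u *\<^sub>R x + v *\<^sub>R y)
      = (u * a / c) *\<^sub>R ((1 / a) *\<^sub>R x) + (v * b / c) *\<^sub>R ((1 / b) *\<^sub>R y)"
    using a b by (simp add: scaleR_add_right)
  have w: "u * a / c \<ge> 0" "v * b / c \<ge> 0" "u * a / c + v * b / c = 1"
    using a b c u v by (auto simp: c_def add_divide_distrib[symmetric])
  have "(u * a / c) * \<Phi> ((1 / a) *\<^sub>R x) + (v * b / c) * \<Phi> ((1 / b) *\<^sub>R y)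
      \<le> \<Phi> ((u * a / c) *\<^sub>R ((1 / a) *\<^sub>R x) + (v * b / c) *\<^sub>R ((1 / b) *\<^sub>R y))"
    using concave normalize_in_open_simplex[OF x] normalize_in_open_simplex[OF y] w
    unfolding concave_on_iff a_def b_def by blast
  then have "(u * a / c) * \<Phi> ((1 / a) *\<^sub>R x) + (v * b / c) * \<Phi> ((1 / b) *\<^sub>R y)
      \<le> \<Phi> ((1 / c) *\<^sub>R (u *\<^sub>R x + v *\<^sub>R y))"
    by (simp only: eq)
  from mult_left_mono[OF this less_imp_le[OF c]] c
  show "u * (coord_sum x * \<Phi> ((1 / coord_sum x) *\<^sub>R x))
      + v * (coord_sum y * \<Phi> ((1 / coord_sum y) *\<^sub>R y))
    \<le> coord_sum (u *\<^sub>R x + v *\<^sub>R y)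
      * \<Phi> ((1 / coord_sum (u *\<^sub>R x + v *\<^sub>R y)) *\<^sub>R (u *\<^sub>R x + v *\<^sub>R y))"
    by (simp add: coord_sum_add coord_sum_scaleR flip: a_def b_def c_def) (simp add: field_simps)
qed

lemma concave_on_open_simplex_continuous:
  fixes \<Phi> :: "real ^ 'n \<Rightarrow> real"
  assumes "concave_on open_simplex \<Phi>"
  shows "continuous_on open_simplex \<Phi>"
proof -
  define \<Psi> where "\<Psi> x = coord_sum x * \<Phi> ((1 / coord_sum x) *\<^sub>R x)" for x
  have "convex_on pos_orthant (\<lambda>x. - \<Psi> x)"
    using concave_on_homogeneous_extension[OF assms] by (simp add: concave_on_def \<Psi>_def)
  then have "continuous_on pos_orthant (\<lambda>x. - (- \<Psi> x))"
    by (intro continuous_intros convex_on_continuous[OF open_pos_orthant])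
  then have "continuous_on open_simplex \<Psi>"
    by (simp add: continuous_on_subset open_simplex_iff subset_iff)
  then show ?thesis
    by (rule continuous_on_eq) (simp add: \<Psi>_def open_simplex_iff)
qed

definition growth_factor :: "(real ^ 'n \<Rightarrow> real ^ 'n) \<Rightarrow> real ^ 'n \<Rightarrow> real ^ 'n \<Rightarrow> real" where
  "growth_factor \<pi> p q = (\<Sum>i\<in>UNIV. \<pi> p $ i * q $ i / p $ i)"

lemma ell_eq_ln_growth_factor: "ell \<pi> x = ln (growth_factor \<pi> (fst x) (snd x))"
  by (simp add: ell_def growth_factor_def)

lemma growth_factor_add: "growth_factor \<pi> p (x + y) = growth_factor \<pi> p x + growth_factor \<pi> p y"
  by (simp add: growth_factor_def sum.distrib[symmetric] distrib_left add_divide_distrib)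

lemma growth_factor_diff: "growth_factor \<pi> p (x - y) = growth_factor \<pi> p x - growth_factor \<pi> p y"
  by (simp add: growth_factor_def sum_subtractf[symmetric] right_diff_distrib diff_divide_distrib)

lemma growth_factor_scaleR: "growth_factor \<pi> p (c *\<^sub>R x) = c * growth_factor \<pi> p x"
  unfolding growth_factor_def sum_distrib_left by (rule sum.cong) (auto simp: algebra_simps)

lemma growth_factor_self:
  assumes "p \<in> open_simplex" "\<pi> p \<in> closed_simplex"
  shows "growth_factor \<pi> p p = 1"
proof -
  have "growth_factor \<pi> p p = (\<Sum>i\<in>UNIV. \<pi> p $ i)"
    unfolding growth_factor_def using assms(1)
    by (intro sum.cong) (auto simp: open_simplex_def less_imp_neq[symmetric])
  then show ?thesis using assms(2) by (simp add: closed_simplex_def)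
qed

lemma closed_simplex_component_le_1: "w \<in> closed_simplex \<Longrightarrow> w $ i \<le> 1"
  unfolding closed_simplex_def
  by (metis (mono_tags, lifting) UNIV_I finite member_le_sum mem_Collect_eq)

lemma abs_growth_factor_le:
  assumes p: "p \<in> open_simplex" and w: "\<pi> p \<in> closed_simplex"
  shows "\<bar>growth_factor \<pi> p v\<bar> \<le> (\<Sum>i\<in>UNIV. \<bar>v $ i\<bar> / p $ i)"
proof -
  have "\<bar>\<pi> p $ i * v $ i / p $ i\<bar> \<le> \<bar>v $ i\<bar> / p $ i" for i
  proof -
    have "0 \<le> \<pi> p $ i" "\<pi> p $ i \<le> 1" "p $ i > 0"
      using w closed_simplex_component_le_1[OF w] p
      by (auto simp: closed_simplex_def open_simplex_def)
    then have "\<pi> p $ i * \<bar>v $ i\<bar> \<le> \<bar>v $ i\<bar>" by (simp add: mult_left_le_one_le)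
    then show ?thesis using \<open>p $ i > 0\<close> \<open>0 \<le> \<pi> p $ i\<close>
      by (simp add: abs_mult divide_right_mono)
  qed
  then show ?thesis
    unfolding growth_factor_def by (rule order_trans[OF sum_abs sum_mono])
qed

lemma S_set_components:
  assumes "(p, q) \<in> S_set M" "M > 0"
  shows "p $ i > 0" "q $ i > 0" "q $ i \<le> M * p $ i" "p $ i \<le> M * q $ i"
proof -
  show p: "p $ i > 0" and q: "q $ i > 0" using assms(1) by (auto simp: S_set_def open_simplex_def)
  have r: "1 / M \<le> q $ i / p $ i" "q $ i / p $ i \<le> M" using assms(1) by (auto simp: S_set_def)
  show "q $ i \<le> M * p $ i" using r(2) p by (simp add: divide_le_eq mult.commute)
  show "p $ i \<le> M * q $ i" using r(1) p assms(2) by (simp add: le_divide_eq field_simps)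
qed

lemma growth_factor_S_set_bounds:
  assumes "(p, q) \<in> S_set M" "\<pi> p \<in> closed_simplex"
  shows "1 / M \<le> growth_factor \<pi> p q" "growth_factor \<pi> p q \<le> M"
proof -
  have w: "\<And>i. 0 \<le> \<pi> p $ i" "(\<Sum>i\<in>UNIV. \<pi> p $ i) = 1"
    using assms(2) by (auto simp: closed_simplex_def)
  have r: "\<And>i. 1 / M \<le> q $ i / p $ i" "\<And>i. q $ i / p $ i \<le> M"
    using assms(1) by (auto simp: S_set_def)
  have eq: "growth_factor \<pi> p q = (\<Sum>i\<in>UNIV. \<pi> p $ i * (q $ i / p $ i))"
    by (simp add: growth_factor_def)
  have "(\<Sum>i\<in>UNIV. \<pi> p $ i * (1 / M)) \<le> growth_factor \<pi> p q"
    unfolding eq using w r by (intro sum_mono mult_left_mono) auto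
  then show "1 / M \<le> growth_factor \<pi> p q" by (simp add: w flip: sum_divide_distrib)
  have "growth_factor \<pi> p q \<le> (\<Sum>i\<in>UNIV. \<pi> p $ i * M)"
    unfolding eq using w r by (intro sum_mono mult_left_mono) auto
  then show "growth_factor \<pi> p q \<le> M" by (simp add: w flip: sum_distrib_right)
qed

lemma S_set_forward_in_open_simplex:
  assumes S: "(p, q) \<in> S_set M" "M > 0" and t: "0 \<le> t" "t \<le> 1"
  shows "p + t *\<^sub>R (q - p) \<in> open_simplex"
proof -
  have "(p + t *\<^sub>R (q - p)) $ i > 0" for i
  proof -
    have "(p + t *\<^sub>R (q - p)) $ i = (1 - t) * p $ i + t * q $ i" by (simp add: algebra_simps)
    then show ?thesis
      using t S_set_components[OF S, of i] by (cases "t = 1") (auto intro: add_pos_nonneg)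
  qed
  moreover have "coord_sum p = 1" "coord_sum q = 1"
    using S(1) by (auto simp: S_set_def open_simplex_iff)
  ultimately show ?thesis
    by (simp add: open_simplex_iff pos_orthant_def coord_sum_add coord_sum_scaleR coord_sum_diff)
qed

lemma S_set_backward_in_open_simplex:
  assumes S: "(p, q) \<in> S_set M" "M > 0" and t: "0 \<le> t" "t * M < 1"
  shows "p - t *\<^sub>R (q - p) \<in> open_simplex"
proof -
  have "(p - t *\<^sub>R (q - p)) $ i > 0" for i
  proof -
    have "t * q $ i \<le> t * M * p $ i"
      using t S_set_components[OF S, of i] by (simp add: mult_left_mono mult.assoc)
    moreover have "t * M * p $ i < p $ i" "0 \<le> t * p $ i"
      using t S_set_components[OF S, of i] by simp_all
    moreover have "(p - t *\<^sub>R (q - p)) $ i = p $ i + t * p $ i - t * q $ i"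
      by (simp add: algebra_simps)
    ultimately show ?thesis by linarith
  qed
  moreover have "coord_sum p = 1" "coord_sum q = 1"
    using S(1) by (auto simp: S_set_def open_simplex_iff)
  ultimately show ?thesis
    by (simp add: open_simplex_iff pos_orthant_def coord_sum_add coord_sum_scaleR coord_sum_diff)
qed

lemma growth_factor_pos_S_set:
  assumes "(p, q) \<in> S_set M" "M > 0" "\<pi> p \<in> closed_simplex"
  shows "growth_factor \<pi> p q > 0"
  using growth_factor_S_set_bounds(1)[of p q M \<pi>, OF assms(1,3)] assms(2)
  by (meson less_le_trans zero_less_divide_1_iff)

lemma abs_ell_le_ln_M:
  assumes S: "x \<in> S_set M" and "M > 0"
    and weights: "\<And>p. p \<in> open_simplex \<Longrightarrow> \<pi> p \<in> closed_simplex"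
  shows "\<bar>ell \<pi> x\<bar> \<le> ln M"
proof -
  obtain p q where x: "x = (p, q)" by force
  have w: "\<pi> p \<in> closed_simplex" using S weights by (simp add: x S_set_def)
  have "1 / M \<le> growth_factor \<pi> p q" "growth_factor \<pi> p q \<le> M" "growth_factor \<pi> p q > 0"
    using growth_factor_S_set_bounds[of p q M \<pi>, OF S[unfolded x] w]
      growth_factor_pos_S_set[of p q M \<pi>, OF S[unfolded x] \<open>M > 0\<close> w]
    by auto
  then have "- ln M \<le> ln (growth_factor \<pi> p q)" "ln (growth_factor \<pi> p q) \<le> ln M"
    using \<open>M > 0\<close> by (auto simp: ln_div[of 1, simplified] simp flip: ln_le_cancel_iff)
  then show ?thesis by (simp add: x ell_eq_ln_growth_factor abs_le_iff)
qed

lemma S_set_borel: "(S_set M :: ((real ^ 'n) \<times> (real ^ 'n)) set) \<in> sets borel"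
proof -
  have [measurable]: "(\<lambda>x::(real ^ 'n) \<times> (real ^ 'n). fst x $ i) \<in> borel_measurable borel"
    "(\<lambda>x::(real ^ 'n) \<times> (real ^ 'n). snd x $ i) \<in> borel_measurable borel" for i
    by (intro borel_measurable_continuous_onI continuous_intros)+
  have "Measurable.pred borel (\<lambda>x::(real ^ 'n) \<times> (real ^ 'n).
      (\<forall>i. 0 < fst x $ i) \<and> (\<Sum>i\<in>UNIV. fst x $ i) = 1
      \<and> (\<forall>i. 0 < snd x $ i) \<and> (\<Sum>i\<in>UNIV. snd x $ i) = 1
      \<and> (\<forall>i. 1 / M \<le> snd x $ i / fst x $ i \<and> snd x $ i / fst x $ i \<le> M))"
    by measurable
  then show ?thesis
    by (simp add: pred_def S_set_def open_simplex_def case_prod_beta')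
qed

section \<open>Kinks of a concave function\<close>

text \<open>For \<open>(p, q) \<in> S_set M\<close> and \<open>k \<ge> step_threshold M\<close>, both \<open>p + (q - p) / k\<close> and
  \<open>p - (q - p) / k\<close> lie in the open simplex.\<close>

definition step_threshold :: "real \<Rightarrow> nat" where
  "step_threshold M = nat \<lceil>M\<rceil> + 1"

lemma step_threshold_bounds:
  assumes "M \<ge> 1" "k \<ge> step_threshold M"
  shows "real k > 0" "1 / real k \<le> 1" "1 / real k * M < 1"
proof -
  have "real k > M" using assms(2) unfolding step_threshold_def by linarith
  then show "real k > 0" "1 / real k \<le> 1" "1 / real k * M < 1"
    using assms(1) by (simp_all add: field_simps)
qed

definition fwd_quotient :: "(real ^ 'n \<Rightarrow> real) \<Rightarrow> nat \<Rightarrow> real ^ 'n \<Rightarrow> real ^ 'n \<Rightarrow> real" where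
  "fwd_quotient \<Phi> k p q = real k * (\<Phi> (p + (1 / real k) *\<^sub>R (q - p)) - \<Phi> p)"

definition bwd_quotient :: "(real ^ 'n \<Rightarrow> real) \<Rightarrow> nat \<Rightarrow> real ^ 'n \<Rightarrow> real ^ 'n \<Rightarrow> real" where
  "bwd_quotient \<Phi> k p q = real k * (\<Phi> p - \<Phi> (p - (1 / real k) *\<^sub>R (q - p)))"

text \<open>The kinks of \<open>\<Phi>\<close>: pairs \<open>(p, q)\<close> at which the one-sided derivatives of \<open>\<Phi>\<close> at \<open>p\<close> in
  direction \<open>q - p\<close>, the limits of the difference quotients, are separated by a gap. Separating
  them by rationals makes the set Borel and its trace on every line countable.\<close>

definition kink_set :: "(real ^ 'n \<Rightarrow> real) \<Rightarrow> real \<Rightarrow> ((real ^ 'n) \<times> (real ^ 'n)) set" where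
  "kink_set \<Phi> M = {x \<in> S_set M. \<exists>a\<in>\<rat>. \<exists>b\<in>\<rat>. a < b
      \<and> (\<forall>k\<ge>step_threshold M. fwd_quotient \<Phi> k (fst x) (snd x) \<le> a)
      \<and> (\<forall>k\<ge>step_threshold M. b \<le> bwd_quotient \<Phi> k (fst x) (snd x))}"

lemma kink_setI:
  assumes "x \<in> S_set M" "a < b"
    and "\<And>k. k \<ge> step_threshold M \<Longrightarrow> fwd_quotient \<Phi> k (fst x) (snd x) \<le> a"
    and "\<And>k. k \<ge> step_threshold M \<Longrightarrow> b \<le> bwd_quotient \<Phi> k (fst x) (snd x)"
  shows "x \<in> kink_set \<Phi> M"
proof -
  obtain r1 where r1: "r1 \<in> \<rat>" "a < r1" "r1 < b" using Rats_dense_in_real[OF assms(2)] by blast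
  obtain r2 where r2: "r2 \<in> \<rat>" "r1 < r2" "r2 < b" using Rats_dense_in_real[OF r1(3)] by blast
  show ?thesis
    unfolding kink_set_def using assms(1) r1 r2 assms(3,4)
    by (smt (verit, best) mem_Collect_eq)
qed

lemma diagonal_not_in_kink_set: "(p, p) \<notin> kink_set \<Phi> M"
  by (auto simp: kink_set_def fwd_quotient_def bwd_quotient_def)

locale concave_simplex_function =
  fixes \<Phi> :: "real ^ 'n \<Rightarrow> real" and M :: real
  assumes M_ge_1: "M \<ge> 1" and concave: "concave_on open_simplex \<Phi>"
begin

lemma M_pos: "M > 0"
  using M_ge_1 by simp

lemma continuous_on_along_S_set:
  assumes "\<And>p q :: real ^ 'n. (p, q) \<in> S_set M \<Longrightarrow> p + t *\<^sub>R (q - p) \<in> open_simplex"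
  shows "continuous_on (S_set M) (\<lambda>x. \<Phi> (fst x + t *\<^sub>R (snd x - fst x)))"
proof (rule continuous_on_compose2[OF concave_on_open_simplex_continuous[OF concave]])
  show "(\<lambda>x. fst x + t *\<^sub>R (snd x - fst x)) ` S_set M \<subseteq> (open_simplex :: (real ^ 'n) set)"
  proof
    fix y :: "real ^ 'n" assume "y \<in> (\<lambda>x. fst x + t *\<^sub>R (snd x - fst x)) ` S_set M"
    then obtain p q where "(p, q) \<in> S_set M" "y = p + t *\<^sub>R (q - p)" by auto
    then show "y \<in> open_simplex" using assms[of p q] by simp
  qed
qed (intro continuous_intros)

lemma continuous_on_quotients:
  assumes "k \<ge> step_threshold M"
  shows "continuous_on (S_set M) (\<lambda>x. fwd_quotient \<Phi> k (fst x) (snd x))"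
    and "continuous_on (S_set M) (\<lambda>x. bwd_quotient \<Phi> k (fst x) (snd x))"
proof -
  note k = step_threshold_bounds[OF M_ge_1 assms]
  have "continuous_on (S_set M) (\<lambda>x. \<Phi> (fst x + 0 *\<^sub>R (snd x - fst x)))"
    by (rule continuous_on_along_S_set) (auto simp: S_set_def)
  moreover have "continuous_on (S_set M) (\<lambda>x. \<Phi> (fst x + (1 / real k) *\<^sub>R (snd x - fst x)))"
    using k by (intro continuous_on_along_S_set S_set_forward_in_open_simplex[OF _ M_pos]) auto
  moreover have "continuous_on (S_set M) (\<lambda>x. \<Phi> (fst x + (- 1 / real k) *\<^sub>R (snd x - fst x)))"
    using k S_set_backward_in_open_simplex[OF _ M_pos, of _ _ "1 / real k"]
    by (intro continuous_on_along_S_set) simp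
  ultimately show "continuous_on (S_set M) (\<lambda>x. fwd_quotient \<Phi> k (fst x) (snd x))"
    "continuous_on (S_set M) (\<lambda>x. bwd_quotient \<Phi> k (fst x) (snd x))"
    unfolding fwd_quotient_def bwd_quotient_def by (auto intro!: continuous_intros)
qed

lemma kink_set_borel: "kink_set \<Phi> M \<in> sets borel"
proof -
  \<comment> \<open>the quotients are continuous only on \<open>S_set M\<close>, so cut them off outside it\<close>
  define fwd where
    "fwd k x = indicator (S_set M) x * fwd_quotient \<Phi> (max k (step_threshold M)) (fst x) (snd x)"
    for k x
  define bwd where
    "bwd k x = indicator (S_set M) x * bwd_quotient \<Phi> (max k (step_threshold M)) (fst x) (snd x)"
    for k x
  have [measurable]: "S_set M \<in> sets borel"
    "fwd k \<in> borel_measurable borel" "bwd k \<in> borel_measurable borel" for k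
    using borel_measurable_continuous_on_indicator[OF S_set_borel
        continuous_on_quotients(1)[of "max k (step_threshold M)"]]
      borel_measurable_continuous_on_indicator[OF S_set_borel
        continuous_on_quotients(2)[of "max k (step_threshold M)"]]
    by (simp_all add: S_set_borel fwd_def[abs_def] bwd_def[abs_def])
  have "Measurable.pred borel (\<lambda>x. x \<in> S_set M \<and> (\<exists>a::rat. \<exists>b::rat. of_rat a < (of_rat b :: real)
      \<and> (\<forall>k\<ge>step_threshold M. fwd k x \<le> of_rat a) \<and> (\<forall>k\<ge>step_threshold M. of_rat b \<le> bwd k x)))"
    by measurable
  also have "(\<lambda>x. x \<in> S_set M \<and> (\<exists>a::rat. \<exists>b::rat. of_rat a < (of_rat b :: real)
      \<and> (\<forall>k\<ge>step_threshold M. fwd k x \<le> of_rat a) \<and> (\<forall>k\<ge>step_threshold M. of_rat b \<le> bwd k x)))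
    = (\<lambda>x. x \<in> kink_set \<Phi> M)"
    unfolding kink_set_def fwd_def bwd_def by (auto simp: fun_eq_iff Rats_def max_absorb1; blast)
  finally show ?thesis by (simp add: pred_def)
qed

lemma quotients_bound_chord:
  assumes p1: "p1 \<in> open_simplex" and p2: "p2 \<in> open_simplex"
    and d: "p2 - p1 = h *\<^sub>R d" and h: "h > 0" and k: "real k * h \<ge> 1"
  shows "(\<Phi> p2 - \<Phi> p1) / h \<le> fwd_quotient \<Phi> k p1 (p1 + d)"
    and "bwd_quotient \<Phi> k p2 (p2 + d) \<le> (\<Phi> p2 - \<Phi> p1) / h"
proof -
  define l where "l = 1 / (real k * h)"
  have k_pos: "real k > 0" using k h by (cases "k = 0") auto
  have l: "0 \<le> l" "l \<le> 1" using k h k_pos by (auto simp: l_def)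
  have step: "(1 / real k) *\<^sub>R d = l *\<^sub>R (p2 - p1)" using h by (simp add: l_def d)
  have "(1 - l) * \<Phi> p1 + l * \<Phi> p2 \<le> \<Phi> (p1 + (1 / real k) *\<^sub>R (p1 + d - p1))"
    using concave_onD[OF concave l p1 p2] by (simp add: step algebra_simps)
  then have "real k * (l * (\<Phi> p2 - \<Phi> p1)) \<le> fwd_quotient \<Phi> k p1 (p1 + d)"
    unfolding fwd_quotient_def using k_pos by (intro mult_left_mono) (auto simp: algebra_simps)
  then show "(\<Phi> p2 - \<Phi> p1) / h \<le> fwd_quotient \<Phi> k p1 (p1 + d)"
    using k_pos h by (simp add: l_def)
  have "(1 - l) * \<Phi> p2 + l * \<Phi> p1 \<le> \<Phi> (p2 - (1 / real k) *\<^sub>R (p2 + d - p2))"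
    using concave_onD[OF concave l p2 p1] by (simp add: step algebra_simps)
  then have "bwd_quotient \<Phi> k p2 (p2 + d) \<le> real k * (l * (\<Phi> p2 - \<Phi> p1))"
    unfolding bwd_quotient_def using k_pos by (intro mult_left_mono) (auto simp: algebra_simps)
  then show "bwd_quotient \<Phi> k p2 (p2 + d) \<le> (\<Phi> p2 - \<Phi> p1) / h"
    using k_pos h by (simp add: l_def)
qed

text \<open>Directional derivatives of a concave function decrease along a line, so the gap at a later
  kink lies below the gap at an earlier one; distinct kinks on a line thus have disjoint gaps.\<close>

lemma kink_gaps_ordered:
  assumes t: "t1 < t2"
    and S1: "(c + t1 *\<^sub>R d, c + t1 *\<^sub>R d + d) \<in> S_set M"
    and S2: "(c + t2 *\<^sub>R d, c + t2 *\<^sub>R d + d) \<in> S_set M"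
    and a1: "\<forall>k\<ge>step_threshold M. fwd_quotient \<Phi> k (c + t1 *\<^sub>R d) (c + t1 *\<^sub>R d + d) \<le> a1"
    and b2: "\<forall>k\<ge>step_threshold M. b2 \<le> bwd_quotient \<Phi> k (c + t2 *\<^sub>R d) (c + t2 *\<^sub>R d + d)"
  shows "b2 \<le> a1"
proof -
  define k where "k = max (step_threshold M) (nat \<lceil>1 / (t2 - t1)\<rceil>)"
  have k: "k \<ge> step_threshold M" by (simp add: k_def)
  have "real k \<ge> 1 / (t2 - t1)" unfolding k_def by linarith
  then have kh: "real k * (t2 - t1) \<ge> 1" using t by (simp add: field_simps)
  have diff: "c + t2 *\<^sub>R d - (c + t1 *\<^sub>R d) = (t2 - t1) *\<^sub>R d" by (simp add: algebra_simps)
  have "c + t1 *\<^sub>R d \<in> open_simplex" "c + t2 *\<^sub>R d \<in> open_simplex"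
    using S1 S2 by (auto simp: S_set_def)
  note chord = quotients_bound_chord[OF this diff _ kh]
  have "b2 \<le> bwd_quotient \<Phi> k (c + t2 *\<^sub>R d) (c + t2 *\<^sub>R d + d)" using b2 k by blast
  also have "\<dots> \<le> fwd_quotient \<Phi> k (c + t1 *\<^sub>R d) (c + t1 *\<^sub>R d + d)"
    using chord t by (meson diff_gt_0_iff_gt order_trans)
  also have "\<dots> \<le> a1" using a1 k by blast
  finally show ?thesis .
qed

lemma countable_kinks_on_line: "countable {t. (c + t *\<^sub>R d, c + t *\<^sub>R d + d) \<in> kink_set \<Phi> M}"
proof -
  define T where "T = {t. (c + t *\<^sub>R d, c + t *\<^sub>R d + d) \<in> kink_set \<Phi> M}"
  define gap where "gap t ab \<longleftrightarrow> fst ab \<in> \<rat> \<and> snd ab \<in> \<rat> \<and> fst ab < snd ab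
     \<and> (\<forall>k\<ge>step_threshold M. fwd_quotient \<Phi> k (c + t *\<^sub>R d) (c + t *\<^sub>R d + d) \<le> fst ab)
     \<and> (\<forall>k\<ge>step_threshold M. snd ab \<le> bwd_quotient \<Phi> k (c + t *\<^sub>R d) (c + t *\<^sub>R d + d))"
    for t and ab :: "real \<times> real"
  have "\<exists>ab. gap t ab" if "t \<in> T" for t
  proof -
    have "(c + t *\<^sub>R d, c + t *\<^sub>R d + d) \<in> kink_set \<Phi> M"
      using that by (simp only: T_def mem_Collect_eq)
    then obtain a b where "a \<in> \<rat>" "b \<in> \<rat>" "a < b"
      "(\<forall>k\<ge>step_threshold M. fwd_quotient \<Phi> k (c + t *\<^sub>R d) (c + t *\<^sub>R d + d) \<le> a)"
      "(\<forall>k\<ge>step_threshold M. b \<le> bwd_quotient \<Phi> k (c + t *\<^sub>R d) (c + t *\<^sub>R d + d))"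
      unfolding kink_set_def mem_Collect_eq fst_conv snd_conv by (elim conjE bexE) (rule that)
    then have "gap t (a, b)" by (simp only: gap_def fst_conv snd_conv)
    then show ?thesis ..
  qed
  then obtain w where w: "\<And>t. t \<in> T \<Longrightarrow> gap t (w t)" by metis
  have S: "t \<in> T \<Longrightarrow> (c + t *\<^sub>R d, c + t *\<^sub>R d + d) \<in> S_set M" for t
    by (auto simp: T_def kink_set_def)
  have ordered: "snd (w t2) \<le> fst (w t1)" if "t1 \<in> T" "t2 \<in> T" "t1 < t2" for t1 t2
    using kink_gaps_ordered[OF that(3) S[OF that(1)] S[OF that(2)]] w[OF that(1)] w[OF that(2)]
    by (simp add: gap_def)
  have gap: "fst (w t) < snd (w t)" if "t \<in> T" for t
    using w[OF that] by (simp add: gap_def)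
  have "inj_on w T"
  proof (rule inj_onI)
    fix t1 t2 assume t: "t1 \<in> T" "t2 \<in> T" "w t1 = w t2"
    show "t1 = t2"
    proof (rule ccontr)
      assume "t1 \<noteq> t2"
      then consider "t1 < t2" | "t2 < t1" by linarith
      then show False
        using ordered[OF t(1,2)] ordered[OF t(2,1)] gap[OF t(1)] gap[OF t(2)] t(3) by cases auto
    qed
  qed
  moreover have "w t \<in> \<rat> \<times> \<rat>" if "t \<in> T" for t
    using w[OF that] by (simp add: gap_def mem_Times_iff)
  then have "w ` T \<subseteq> \<rat> \<times> \<rat>" by (rule image_subsetI)
  then have "countable (w ` T)"
    by (rule countable_subset) (intro countable_SIGMA countable_rat)
  ultimately have "countable T" by (rule countable_image_inj_on[rotated])
  then show ?thesis by (simp only: T_def)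
qed

end

section \<open>Continuity of the log-return off the kink set\<close>

locale generated_portfolio = concave_simplex_function +
  fixes \<pi> :: "real ^ 'n \<Rightarrow> real ^ 'n"
  assumes weights: "\<And>p. p \<in> open_simplex \<Longrightarrow> \<pi> p \<in> closed_simplex"
    and \<Phi>_pos: "\<And>p. p \<in> open_simplex \<Longrightarrow> \<Phi> p > 0"
    and generating_ineq:
      "\<And>p q. p \<in> open_simplex \<Longrightarrow> q \<in> open_simplex \<Longrightarrow> \<Phi> q / \<Phi> p \<le> growth_factor \<pi> p q"
begin

lemma growth_factor_ge_fwd:
  assumes S: "(p, q) \<in> S_set M" and k: "k \<ge> step_threshold M" and p': "p' \<in> open_simplex"
  shows "growth_factor \<pi> p' p
      + real k * (\<Phi> (p + (1 / real k) *\<^sub>R (q - p)) / \<Phi> p' - growth_factor \<pi> p' p)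
    \<le> growth_factor \<pi> p' q"
proof -
  define x where "x = p + (1 / real k) *\<^sub>R (q - p)"
  note k = step_threshold_bounds[OF M_ge_1 k]
  have "x \<in> open_simplex" unfolding x_def using S_set_forward_in_open_simplex[OF S M_pos] k by simp
  moreover have "growth_factor \<pi> p' x
      = growth_factor \<pi> p' p + (1 / real k) * (growth_factor \<pi> p' q - growth_factor \<pi> p' p)"
    by (simp add: x_def growth_factor_add growth_factor_scaleR growth_factor_diff)
  ultimately have "\<Phi> x / \<Phi> p'
      \<le> growth_factor \<pi> p' p + (1 / real k) * (growth_factor \<pi> p' q - growth_factor \<pi> p' p)"
    using generating_ineq[OF p'] by metis
  then have "real k * (\<Phi> x / \<Phi> p' - growth_factor \<pi> p' p)
      \<le> growth_factor \<pi> p' q - growth_factor \<pi> p' p"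
    using k by (simp add: field_simps)
  then show ?thesis by (simp add: x_def)
qed

lemma growth_factor_le_bwd:
  assumes S: "(p, q) \<in> S_set M" and k: "k \<ge> step_threshold M" and p': "p' \<in> open_simplex"
  shows "growth_factor \<pi> p' q
    \<le> growth_factor \<pi> p' p
      + real k * (growth_factor \<pi> p' p - \<Phi> (p - (1 / real k) *\<^sub>R (q - p)) / \<Phi> p')"
proof -
  define y where "y = p - (1 / real k) *\<^sub>R (q - p)"
  note k = step_threshold_bounds[OF M_ge_1 k]
  have "y \<in> open_simplex" unfolding y_def using S_set_backward_in_open_simplex[OF S M_pos] k by simp
  moreover have "growth_factor \<pi> p' y
      = growth_factor \<pi> p' p - (1 / real k) * (growth_factor \<pi> p' q - growth_factor \<pi> p' p)"
    by (simp add: y_def growth_factor_add growth_factor_scaleR growth_factor_diff)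
  ultimately have "\<Phi> y / \<Phi> p'
      \<le> growth_factor \<pi> p' p - (1 / real k) * (growth_factor \<pi> p' q - growth_factor \<pi> p' p)"
    using generating_ineq[OF p'] by metis
  then have "growth_factor \<pi> p' q - growth_factor \<pi> p' p
      \<le> real k * (growth_factor \<pi> p' p - \<Phi> y / \<Phi> p')"
    using k by (simp add: field_simps)
  then show ?thesis by (simp add: y_def)
qed

lemma quotients_bound_growth_factor:
  assumes S: "(p, q) \<in> S_set M" and k: "k \<ge> step_threshold M"
  shows "fwd_quotient \<Phi> k p q \<le> (growth_factor \<pi> p q - 1) * \<Phi> p"
    and "(growth_factor \<pi> p q - 1) * \<Phi> p \<le> bwd_quotient \<Phi> k p q"
proof -
  define x y where "x = p + (1 / real k) *\<^sub>R (q - p)" and "y = p - (1 / real k) *\<^sub>R (q - p)"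
  have p: "p \<in> open_simplex" using S by (simp add: S_set_def)
  have one: "growth_factor \<pi> p p = 1" and pos: "\<Phi> p > 0"
    using growth_factor_self[of p \<pi>, OF p weights[OF p]] \<Phi>_pos[OF p] .
  have "real k * (\<Phi> x / \<Phi> p - 1) \<le> growth_factor \<pi> p q - 1"
    using growth_factor_ge_fwd[OF S k p] by (simp add: one x_def)
  from mult_right_mono[OF this less_imp_le[OF pos]]
  show "fwd_quotient \<Phi> k p q \<le> (growth_factor \<pi> p q - 1) * \<Phi> p"
    using pos by (simp add: fwd_quotient_def x_def algebra_simps)
  have "growth_factor \<pi> p q - 1 \<le> real k * (1 - \<Phi> y / \<Phi> p)"
    using growth_factor_le_bwd[OF S k p] by (simp add: one y_def)
  from mult_right_mono[OF this less_imp_le[OF pos]]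
  show "(growth_factor \<pi> p q - 1) * \<Phi> p \<le> bwd_quotient \<Phi> k p q"
    using pos by (simp add: bwd_quotient_def y_def algebra_simps)
qed

text \<open>Off the kink set the bounds of \<open>quotients_bound_growth_factor\<close> pinch: the difference
  quotients approach \<open>(growth_factor \<pi> p q - 1) * \<Phi> p\<close> from both sides.\<close>

lemma fwd_quotient_approaches:
  assumes S: "(p, q) \<in> S_set M" and smooth: "(p, q) \<notin> kink_set \<Phi> M" and a: "a < growth_factor \<pi> p q"
  shows "\<exists>k\<ge>step_threshold M. (a - 1) * \<Phi> p < fwd_quotient \<Phi> k p q"
proof (rule ccontr)
  assume "\<not> ?thesis"
  moreover have "(a - 1) * \<Phi> p < (growth_factor \<pi> p q - 1) * \<Phi> p"
    using a \<Phi>_pos S by (simp add: S_set_def)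
  ultimately have "(p, q) \<in> kink_set \<Phi> M"
    using quotients_bound_growth_factor(2)[OF S] by (intro kink_setI[OF S]) (auto simp: not_less)
  with smooth show False ..
qed

lemma bwd_quotient_approaches:
  assumes S: "(p, q) \<in> S_set M" and smooth: "(p, q) \<notin> kink_set \<Phi> M" and a: "growth_factor \<pi> p q < a"
  shows "\<exists>k\<ge>step_threshold M. bwd_quotient \<Phi> k p q < (a - 1) * \<Phi> p"
proof (rule ccontr)
  assume "\<not> ?thesis"
  moreover have "(growth_factor \<pi> p q - 1) * \<Phi> p < (a - 1) * \<Phi> p"
    using a \<Phi>_pos S by (simp add: S_set_def)
  ultimately have "(p, q) \<in> kink_set \<Phi> M"
    using quotients_bound_growth_factor(1)[OF S] by (intro kink_setI[OF S]) (auto simp: not_less)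
  with smooth show False ..
qed

lemma growth_factor_diff_tendsto_0:
  assumes F: "eventually (\<lambda>x. fst x \<in> open_simplex) F" "((\<lambda>x. fst x) \<longlongrightarrow> p) F"
    and p: "p \<in> open_simplex" and g: "(g \<longlongrightarrow> c) F"
  shows "((\<lambda>x. growth_factor \<pi> (fst x) (g x - c)) \<longlongrightarrow> 0) F"
proof (rule Lim_null_comparison)
  show "eventually (\<lambda>x. norm (growth_factor \<pi> (fst x) (g x - c))
      \<le> (\<Sum>i\<in>UNIV. \<bar>g x $ i - c $ i\<bar> / fst x $ i)) F"
    using F(1)
  proof eventually_elim
    case (elim x)
    show ?case using abs_growth_factor_le[of "fst x" \<pi> "g x - c", OF elim weights[OF elim]] by simp
  qed
  have "((\<lambda>x. \<Sum>i\<in>UNIV. \<bar>g x $ i - c $ i\<bar> / fst x $ i) \<longlongrightarrow> (\<Sum>i\<in>UNIV. \<bar>c $ i - c $ i\<bar> / p $ i)) F"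
    using p by (intro tendsto_intros g F(2)) (auto simp: open_simplex_def less_imp_neq[symmetric])
  then show "((\<lambda>x. \<Sum>i\<in>UNIV. \<bar>g x $ i - c $ i\<bar> / fst x $ i) \<longlongrightarrow> 0) F" by simp
qed

context
  fixes p q :: "real ^ 'n"
  assumes S: "(p, q) \<in> S_set M"
begin

lemma eventually_fst_in_open_simplex:
  "eventually (\<lambda>x. fst x \<in> open_simplex) (at (p, q) within S_set M)"
  unfolding eventually_at_filter by (rule always_eventually) (auto simp: S_set_def)

lemma fst_tendsto: "((\<lambda>x. fst x) \<longlongrightarrow> p) (at (p, q) within S_set M)"
  using tendsto_fst[OF tendsto_ident_at[of "(p, q)" "S_set M"]] by simp

lemma growth_factor_fst_self_tendsto:
  "((\<lambda>x. growth_factor \<pi> (fst x) p) \<longlongrightarrow> 1) (at (p, q) within S_set M)"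
proof -
  have p: "p \<in> open_simplex" using S by (simp add: S_set_def)
  have "((\<lambda>x. 1 - growth_factor \<pi> (fst x) (fst x - p)) \<longlongrightarrow> 1 - 0) (at (p, q) within S_set M)"
    by (intro tendsto_intros
        growth_factor_diff_tendsto_0[OF eventually_fst_in_open_simplex fst_tendsto p fst_tendsto])
  moreover have "eventually (\<lambda>x.
      1 - growth_factor \<pi> (fst x) (fst x - p) = growth_factor \<pi> (fst x) p) (at (p, q) within S_set M)"
    using eventually_fst_in_open_simplex
    by eventually_elim (simp add: growth_factor_diff growth_factor_self weights)
  ultimately show ?thesis by (simp add: tendsto_cong)
qed

lemma \<Phi>_fst_tendsto: "((\<lambda>x. \<Phi> (fst x)) \<longlongrightarrow> \<Phi> p) (at (p, q) within S_set M)"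
proof -
  have "continuous_on (S_set M) (\<lambda>x. \<Phi> (fst x))"
    by (rule continuous_on_compose2[OF concave_on_open_simplex_continuous[OF concave]])
      (auto intro!: continuous_intros simp: S_set_def)
  then show ?thesis using S unfolding continuous_on_def by auto
qed

lemma growth_factor_fst_eventually_gt:
  assumes smooth: "(p, q) \<notin> kink_set \<Phi> M" and a: "a < growth_factor \<pi> p q"
  shows "eventually (\<lambda>x. a < growth_factor \<pi> (fst x) q) (at (p, q) within S_set M)"
proof -
  have pos: "\<Phi> p > 0" using \<Phi>_pos S by (simp add: S_set_def)
  obtain k where k: "k \<ge> step_threshold M" and "(a - 1) * \<Phi> p < fwd_quotient \<Phi> k p q"
    using fwd_quotient_approaches[OF S smooth a] by blast
  define x where "x = p + (1 / real k) *\<^sub>R (q - p)"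
  have "a < 1 + real k * (\<Phi> x / \<Phi> p - 1)"
    using \<open>(a - 1) * \<Phi> p < _\<close> pos by (simp add: fwd_quotient_def x_def field_simps)
  moreover have "((\<lambda>y. growth_factor \<pi> (fst y) p
      + real k * (\<Phi> x / \<Phi> (fst y) - growth_factor \<pi> (fst y) p))
      \<longlongrightarrow> 1 + real k * (\<Phi> x / \<Phi> p - 1)) (at (p, q) within S_set M)"
    using pos by (intro tendsto_intros growth_factor_fst_self_tendsto \<Phi>_fst_tendsto) auto
  ultimately have "eventually (\<lambda>y. a < growth_factor \<pi> (fst y) p
      + real k * (\<Phi> x / \<Phi> (fst y) - growth_factor \<pi> (fst y) p)) (at (p, q) within S_set M)"
    by (rule order_tendstoD(1)[rotated])
  with eventually_fst_in_open_simplex show ?thesis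
    by eventually_elim (use growth_factor_ge_fwd[OF S k] in \<open>fastforce simp: x_def\<close>)
qed

lemma growth_factor_fst_eventually_less:
  assumes smooth: "(p, q) \<notin> kink_set \<Phi> M" and a: "growth_factor \<pi> p q < a"
  shows "eventually (\<lambda>x. growth_factor \<pi> (fst x) q < a) (at (p, q) within S_set M)"
proof -
  have pos: "\<Phi> p > 0" using \<Phi>_pos S by (simp add: S_set_def)
  obtain k where k: "k \<ge> step_threshold M" and "bwd_quotient \<Phi> k p q < (a - 1) * \<Phi> p"
    using bwd_quotient_approaches[OF S smooth a] by blast
  define y where "y = p - (1 / real k) *\<^sub>R (q - p)"
  have "1 + real k * (1 - \<Phi> y / \<Phi> p) < a"
    using \<open>_ < (a - 1) * \<Phi> p\<close> pos by (simp add: bwd_quotient_def y_def field_simps)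
  moreover have "((\<lambda>x. growth_factor \<pi> (fst x) p
      + real k * (growth_factor \<pi> (fst x) p - \<Phi> y / \<Phi> (fst x)))
      \<longlongrightarrow> 1 + real k * (1 - \<Phi> y / \<Phi> p)) (at (p, q) within S_set M)"
    using pos by (intro tendsto_intros growth_factor_fst_self_tendsto \<Phi>_fst_tendsto) auto
  ultimately have "eventually (\<lambda>x. growth_factor \<pi> (fst x) p
      + real k * (growth_factor \<pi> (fst x) p - \<Phi> y / \<Phi> (fst x)) < a) (at (p, q) within S_set M)"
    by (rule order_tendstoD(2)[rotated])
  with eventually_fst_in_open_simplex show ?thesis
    by eventually_elim (use growth_factor_le_bwd[OF S k] in \<open>fastforce simp: y_def\<close>)
qed

lemma ell_continuous_within:
  assumes smooth: "(p, q) \<notin> kink_set \<Phi> M"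
  shows "continuous (at (p, q) within S_set M) (ell \<pi>)"
proof -
  have p: "p \<in> open_simplex" using S by (simp add: S_set_def)
  have "((\<lambda>x. growth_factor \<pi> (fst x) (snd x - q) + growth_factor \<pi> (fst x) q)
      \<longlongrightarrow> 0 + growth_factor \<pi> p q) (at (p, q) within S_set M)"
    using tendsto_snd[OF tendsto_ident_at[of "(p, q)" "S_set M"]]
    by (intro tendsto_add order_tendstoI
        growth_factor_diff_tendsto_0[OF eventually_fst_in_open_simplex fst_tendsto p]
        growth_factor_fst_eventually_gt[OF smooth] growth_factor_fst_eventually_less[OF smooth])
      simp
  then have "((\<lambda>x. growth_factor \<pi> (fst x) (snd x)) \<longlongrightarrow> growth_factor \<pi> p q)
      (at (p, q) within S_set M)"
    by (simp add: growth_factor_diff)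
  moreover have "growth_factor \<pi> p q > 0"
    by (rule growth_factor_pos_S_set[of p q M \<pi>, OF S M_pos weights[OF p]])
  ultimately have "((\<lambda>x. ln (growth_factor \<pi> (fst x) (snd x))) \<longlongrightarrow> ln (growth_factor \<pi> p q))
      (at (p, q) within S_set M)"
    by (intro tendsto_ln) auto
  then show ?thesis
    unfolding continuous_within by (simp add: ell_eq_ln_growth_factor[abs_def])
qed

end

end

section \<open>Null sets with countable sections along lines\<close>

lemma countable_axis_lines_imp_null:
  fixes H :: "'a::euclidean_space set" and e :: 'a
  assumes H: "H \<in> sets borel" and e: "e \<in> Basis"
    and countable: "\<And>w. countable {t::real. w + t *\<^sub>R e \<in> H}"
  shows "H \<in> null_sets lborel"
proof -
  interpret product_sigma_finite "\<lambda>_::'a. lborel :: real measure"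
    by standard
  define I where "I = Basis - {e}"
  have BI: "Basis = insert e I" and eI: "e \<notin> I" and fI: "finite I" using e by (auto simp: I_def)
  define g where "g f = (\<Sum>b\<in>Basis. f b *\<^sub>R b)" for f :: "'a \<Rightarrow> real"
  have g_meas: "g \<in> borel_measurable (\<Pi>\<^sub>M b\<in>Basis. lborel)" unfolding g_def by measurable
  define G where "G = g -` H \<inter> space (\<Pi>\<^sub>M b\<in>insert e I. lborel)"
  \<comment> \<open>by Fubini, integrate first along the coordinate \<open>e\<close>, where each section of \<open>H\<close> is countable\<close>
  have section_null: "(\<integral>\<^sup>+ y. indicator G (x(e := y)) \<partial>lborel) = 0"
    if x: "x \<in> space (\<Pi>\<^sub>M b\<in>I. lborel)" for x
  proof -
    define c where "c = (\<Sum>b\<in>I. x b *\<^sub>R b)"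
    have geq: "g (x(e := y)) = c + y *\<^sub>R e" for y
    proof -
      have "g (x(e := y)) = (x(e := y)) e *\<^sub>R e + (\<Sum>b\<in>I. (x(e := y)) b *\<^sub>R b)"
        unfolding g_def BI using fI eI by (simp add: sum.insert)
      also have "(\<Sum>b\<in>I. (x(e := y)) b *\<^sub>R b) = c"
        unfolding c_def using eI by (intro sum.cong) auto
      finally show ?thesis by (metis add.commute fun_upd_same)
    qed
    have "(\<lambda>y. indicator G (x(e := y)) :: ennreal)
          = indicator {y. c + y *\<^sub>R e \<in> H}"
      using x by (auto simp: G_def geq space_PiM PiE_def extensional_def indicator_def fun_eq_iff)
    moreover have N: "{y. c + y *\<^sub>R e \<in> H} \<in> null_sets lborel"
      using countable[of c] by (rule countable_imp_null_set_lborel)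
    moreover have "integral\<^sup>N lborel (indicator {y. c + y *\<^sub>R e \<in> H}) = 0"
      using N by (metis nn_integral_indicator null_setsD1 null_setsD2)
    ultimately show ?thesis by simp
  qed
  have "emeasure lborel H = emeasure (distr (\<Pi>\<^sub>M b\<in>Basis. lborel) borel g) H"
    unfolding g_def[abs_def] by (subst lborel_eq) simp
  also have "\<dots> = emeasure (\<Pi>\<^sub>M b\<in>Basis. lborel) (g -` H \<inter> space (\<Pi>\<^sub>M b\<in>Basis. lborel))"
    by (rule emeasure_distr[OF g_meas]) (use H in simp)
  also have "\<dots> = (\<integral>\<^sup>+ f. indicator (g -` H \<inter> space (\<Pi>\<^sub>M b\<in>Basis. lborel)) f \<partial>(\<Pi>\<^sub>M b\<in>Basis. lborel))"
    using H by (intro nn_integral_indicator[symmetric] measurable_sets[OF g_meas])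
  also have "\<dots> = (\<integral>\<^sup>+ f. indicator G f \<partial>(\<Pi>\<^sub>M b\<in>insert e I. lborel))"
    by (simp add: BI G_def)
  also have "\<dots> = (\<integral>\<^sup>+ x. (\<integral>\<^sup>+ y. indicator G (x(e := y)) \<partial>lborel) \<partial>(\<Pi>\<^sub>M b\<in>I. lborel))"
  proof (rule product_nn_integral_insert[OF fI eI])
    show "indicator G \<in> borel_measurable (\<Pi>\<^sub>M b\<in>insert e I. lborel)"
      using H g_meas unfolding BI G_def
      by (intro borel_measurable_indicator measurable_sets[where M="\<Pi>\<^sub>M b\<in>insert e I. lborel"]) auto
  qed
  also have "\<dots> = (\<integral>\<^sup>+ x. 0 \<partial>(\<Pi>\<^sub>M b\<in>I. (lborel :: real measure)))"
    using section_null by (intro nn_integral_cong) simp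
  also have "\<dots> = 0" by simp
  finally show ?thesis using H by (simp add: null_sets_def)
qed

definition shear :: "'n \<Rightarrow> real ^ 'n \<Rightarrow> real ^ 'n \<Rightarrow> real ^ 'n" where
  "shear i v w = w + (w $ i) *\<^sub>R (v - axis i 1)"

lemma linear_shear: "linear (shear i v)"
  unfolding shear_def[abs_def] by (intro linearI) (auto simp: algebra_simps)

lemma shear_line: "shear i v (w + t *\<^sub>R axis i 1) = shear i v w + t *\<^sub>R v"
  by (simp add: shear_def axis_def algebra_simps scaleR_add_left)

lemma surj_shear:
  assumes "v $ i = 1"
  shows "surj (shear i v)"
proof (rule surjI)
  fix w
  show "shear i v (w - (w $ i) *\<^sub>R (v - axis i 1)) = w"
    using assms by (simp add: shear_def axis_def)
qed

lemma countable_lines_imp_null: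
  fixes H :: "(real ^ 'n) set" and d :: "real ^ 'n"
  assumes H: "H \<in> sets borel" and d: "d \<noteq> 0"
    and countable: "\<And>w. countable {t::real. w + t *\<^sub>R d \<in> H}"
  shows "H \<in> null_sets lborel"
proof -
  obtain i where di: "d $ i \<noteq> 0" using d by (metis vec_eq_iff zero_index)
  \<comment> \<open>\<open>T\<close> maps lines along \<open>axis i 1\<close> onto lines along \<open>d\<close>\<close>
  define T where "T = shear i ((1 / d $ i) *\<^sub>R d)"
  have lin: "linear T" unfolding T_def by (rule linear_shear)
  have G: "T -` H \<in> sets borel"
    using measurable_sets_borel[OF borel_measurable_continuous_onI[OF linear_continuous_on] H]
      linear_linear lin by blast
  have lines: "countable {t. w + t *\<^sub>R axis i 1 \<in> T -` H}" for w
  proof -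
    have "{t. w + t *\<^sub>R axis i 1 \<in> T -` H} \<subseteq> (\<lambda>s. s * d $ i) ` {s. T w + s *\<^sub>R d \<in> H}"
    proof
      fix t assume "t \<in> {t. w + t *\<^sub>R axis i 1 \<in> T -` H}"
      then have "T w + (t / d $ i) *\<^sub>R d \<in> H" by (simp add: T_def shear_line)
      moreover have "t = (t / d $ i) * d $ i" using di by simp
      ultimately show "t \<in> (\<lambda>s. s * d $ i) ` {s. T w + s *\<^sub>R d \<in> H}" by blast
    qed
    then show ?thesis using countable_image[OF countable[of "T w"]] countable_subset by blast
  qed
  have "T -` H \<in> null_sets lborel"
    by (rule countable_axis_lines_imp_null[OF G _ lines]) simp
  then have "negligible (T ` (T -` H))"
    by (intro negligible_differentiable_image_negligible[OF order_refl]
        linear_imp_differentiable_on[OF lin])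
      (simp add: negligible_iff_null_sets null_sets_completionI)
  moreover have "T ` (T -` H) = H"
    using surj_shear[of "(1 / d $ i) *\<^sub>R d" i] di by (simp add: T_def surj_image_vimage_eq)
  ultimately show ?thesis
    using H null_sets_completion_iff[of H lborel] by (simp add: negligible_iff_null_sets)
qed

definition affine_proj :: "real ^ 'n \<Rightarrow> real ^ 'n" where
  "affine_proj x = x - ((coord_sum x - 1) / real CARD('n)) *\<^sub>R ones_vec"

definition linear_proj :: "real ^ 'n \<Rightarrow> real ^ 'n" where
  "linear_proj z = z - (coord_sum z / real CARD('n)) *\<^sub>R ones_vec"

lemma affine_proj_add: "affine_proj (x + z) = affine_proj x + linear_proj (z :: real ^ 'n)"
proof -
  have "(coord_sum x + coord_sum z - 1) / real CARD('n)
      = (coord_sum x - 1) / real CARD('n) + coord_sum z / real CARD('n)"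
    by (simp add: add_divide_distrib diff_divide_distrib)
  then show ?thesis
    unfolding affine_proj_def linear_proj_def coord_sum_add by (simp add: scaleR_add_left)
qed

lemma coord_sum_linear_proj: "coord_sum (linear_proj (z :: real ^ 'n)) = 0"
  by (simp add: linear_proj_def coord_sum_diff coord_sum_scaleR coord_sum_ones_vec)

lemma affine_proj_line:
  "coord_sum d = 0 \<Longrightarrow> affine_proj (x + t *\<^sub>R d) = affine_proj x + t *\<^sub>R (d :: real ^ 'n)"
  by (simp add: affine_proj_def coord_sum_add coord_sum_scaleR algebra_simps)

lemma affine_proj_open_simplex:
  "p \<in> open_simplex \<Longrightarrow> affine_proj (p + s *\<^sub>R ones_vec) = (p :: real ^ 'n)"
  by (simp add: affine_proj_def coord_sum_add coord_sum_scaleR coord_sum_ones_vec open_simplex_iff)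

lemma continuous_on_affine_proj: "continuous_on A (affine_proj :: real ^ 'n \<Rightarrow> real ^ 'n)"
  unfolding affine_proj_def[abs_def] coord_sum_def by (intro continuous_intros) auto

lemma null_sets_affine_proj_pairs:
  fixes B :: "((real ^ 'n) \<times> (real ^ 'n)) set"
  assumes B: "B \<in> sets borel"
    and no_diagonal: "\<And>p. (p, p) \<notin> B"
    and countable: "\<And>c d. countable {t. (c + t *\<^sub>R d, c + t *\<^sub>R d + d) \<in> B}"
  shows "{zx. (affine_proj (snd zx), affine_proj (snd zx + fst zx)) \<in> B} \<in> null_sets lborel"
    (is "?F \<in> _")
proof -
  have F_meas: "?F \<in> sets borel"
  proof -
    have "(\<lambda>zx :: (real ^ 'n) \<times> (real ^ 'n). (affine_proj (snd zx), affine_proj (snd zx + fst zx)))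
        \<in> borel_measurable borel"
      by (intro borel_measurable_continuous_onI continuous_intros
          continuous_on_compose2[OF continuous_on_affine_proj]) auto
    from measurable_sets_borel[OF this B] show ?thesis by (simp add: vimage_def)
  qed
  have section_null: "Pair z -` ?F \<in> null_sets lborel" for z
  proof (cases "linear_proj z = 0")
    case True
    then have "Pair z -` ?F = {}" by (auto simp: affine_proj_add no_diagonal)
    then show ?thesis by simp
  next
    case False
    have "(\<lambda>x :: real ^ 'n. (z, x)) \<in> borel_measurable borel"
      by (intro borel_measurable_continuous_onI continuous_intros)
    from measurable_sets_borel[OF this F_meas] have "Pair z -` ?F \<in> sets borel"
      by (simp add: vimage_def)
    moreover have "{t. w + t *\<^sub>R linear_proj z \<in> Pair z -` ?F}
        = {t. (affine_proj w + t *\<^sub>R linear_proj z,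
               affine_proj w + t *\<^sub>R linear_proj z + linear_proj z) \<in> B}"
      for w
      using affine_proj_add[of "w + t *\<^sub>R linear_proj z" z for t]
      by (simp add: affine_proj_line[OF coord_sum_linear_proj])
    ultimately show ?thesis
      using countable by (intro countable_lines_imp_null[OF _ False]) auto
  qed
  have "emeasure (lborel \<Otimes>\<^sub>M lborel) ?F = (\<integral>\<^sup>+ z. emeasure lborel (Pair z -` ?F) \<partial>lborel)"
    using F_meas by (intro lborel.emeasure_pair_measure_alt) (simp only: lborel_prod sets_lborel)
  also have "\<dots> = 0"
    using section_null by (simp add: null_setsD1)
  finally show ?thesis
    using F_meas by (simp add: lborel_prod null_sets_def)
qed

lemma negligible_thicken:
  fixes B :: "((real ^ 'n) \<times> (real ^ 'n)) set"
  assumes B: "B \<in> sets borel" "B \<subseteq> open_simplex \<times> open_simplex"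
    and no_diagonal: "\<And>p. (p, p) \<notin> B"
    and countable: "\<And>c d. countable {t. (c + t *\<^sub>R d, c + t *\<^sub>R d + d) \<in> B}"
  shows "negligible (thicken B)"
proof -
  define F where "F = {zx. (affine_proj (snd zx), affine_proj (snd zx + fst zx)) \<in> B}"
  have "negligible F"
    using null_sets_affine_proj_pairs[OF B(1) no_diagonal countable]
    by (simp add: F_def negligible_iff_null_sets null_sets_completionI)
  moreover have "linear (\<lambda>zx :: (real ^ 'n) \<times> (real ^ 'n). (snd zx, snd zx + fst zx))"
    by (intro linearI) (auto simp: algebra_simps)
  ultimately have "negligible ((\<lambda>zx. (snd zx, snd zx + fst zx)) ` F)"
    by (intro negligible_differentiable_image_negligible[OF order_refl]
        linear_imp_differentiable_on)
  moreover have "thicken B \<subseteq> (\<lambda>zx. (snd zx, snd zx + fst zx)) ` F"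
  proof
    fix xy assume "xy \<in> thicken B"
    then obtain p q s r
      where pq: "(p, q) \<in> B" and xy: "xy = (p + s *\<^sub>R ones_vec, q + r *\<^sub>R ones_vec)"
      by (auto simp: thicken_def)
    then have "(q + r *\<^sub>R ones_vec - (p + s *\<^sub>R ones_vec), p + s *\<^sub>R ones_vec) \<in> F"
      using B(2) by (auto simp: F_def affine_proj_open_simplex)
    then show "xy \<in> (\<lambda>zx. (snd zx, snd zx + fst zx)) ` F"
      by (rule rev_image_eqI) (simp add: xy)
  qed
  ultimately show ?thesis by (rule negligible_subset)
qed

section \<open>The growth rate\<close>

lemma kink_set_null:
  assumes "concave_simplex_function \<Phi> M" and P: "sets P = sets borel" "simplex_abs_cont P"
  shows "kink_set \<Phi> M \<in> null_sets P"
proof -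
  interpret concave_simplex_function \<Phi> M by fact
  have B: "kink_set \<Phi> M \<in> sets borel" "kink_set \<Phi> M \<subseteq> open_simplex \<times> open_simplex"
    using kink_set_borel by (auto simp: kink_set_def S_set_def)
  have "negligible (thicken (kink_set \<Phi> M))"
    using B diagonal_not_in_kink_set countable_kinks_on_line by (rule negligible_thicken)
  then have "emeasure P (kink_set \<Phi> M) = 0"
    using P(2) B unfolding simplex_abs_cont_def negligible_iff_null_sets by blast
  then show ?thesis using B P(1) by (simp add: null_sets_def)
qed

lemma AE_continuous_ell:
  assumes "generated_portfolio \<Phi> M \<pi>" and P: "sets P = sets borel" "simplex_abs_cont P"
  shows "AE x in P. x \<in> S_set M \<longrightarrow> continuous (at x within S_set M) (ell \<pi>)"
proof -
  interpret generated_portfolio \<Phi> M \<pi> by fact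
  have "kink_set \<Phi> M \<in> null_sets P"
    using kink_set_null[OF concave_simplex_function_axioms P] .
  then show ?thesis
    by (rule AE_not_in[THEN AE_mp]) (auto intro: ell_continuous_within)
qed

lemma ratio_bounds_imp_ge_1:
  fixes M r :: real
  assumes "M > 0" "1 / M \<le> r" "r \<le> M"
  shows "M \<ge> 1"
proof (rule ccontr)
  assume "\<not> M \<ge> 1"
  then have "r < 1" using assms(3) by linarith
  then have "M * r < M * 1" using assms(1) by (rule mult_strict_left_mono)
  then have "M * r < 1" using \<open>\<not> M \<ge> 1\<close> by linarith
  moreover have "1 \<le> M * r" using assms by (simp add: field_simps)
  ultimately show False by linarith
qed

lemma FG_imp_generated_portfolio:
  assumes "\<pi> \<in> FG" "M \<ge> 1"
  obtains \<Phi> where "generated_portfolio \<Phi> M \<pi>"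
proof -
  from assms(1) obtain \<Phi> where "\<And>p. p \<in> open_simplex \<Longrightarrow> \<pi> p \<in> closed_simplex"
    "concave_on open_simplex \<Phi>" "\<And>p. p \<in> open_simplex \<Longrightarrow> \<Phi> p > 0"
    "\<And>p q. p \<in> open_simplex \<Longrightarrow> q \<in> open_simplex \<Longrightarrow> \<Phi> q / \<Phi> p \<le> growth_factor \<pi> p q"
    unfolding FG_def growth_factor_def by auto
  then have "generated_portfolio \<Phi> M \<pi>"
    using assms(2) by unfold_locales auto
  then show thesis by (rule that)
qed

lemma ln_rel_value:
  assumes "\<And>s. growth_factor \<pi> (\<mu> s) (\<mu> (Suc s)) > 0"
  shows "ln (rel_value \<pi> \<mu> t) = (\<Sum>s<t. ell \<pi> (\<mu> s, \<mu> (Suc s)))"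
proof -
  have "rel_value \<pi> \<mu> t > 0 \<and> ln (rel_value \<pi> \<mu> t) = (\<Sum>s<t. ell \<pi> (\<mu> s, \<mu> (Suc s)))"
  proof (induction t)
    case (Suc t)
    have "rel_value \<pi> \<mu> (Suc t) = rel_value \<pi> \<mu> t * growth_factor \<pi> (\<mu> t) (\<mu> (Suc t))"
      by (simp add: growth_factor_def)
    with Suc assms[of t] show ?case
      by (simp add: ln_mult ell_eq_ln_growth_factor del: rel_value.simps)
  qed simp
  then show ?thesis ..
qed

lemma integrable_emp_measure: "t > 0 \<Longrightarrow> integrable (emp_measure \<mu> t) (h :: _ \<Rightarrow> real)"
  unfolding emp_measure_def
  by (intro integrable_measure_pmf_finite) (auto simp: set_pmf_of_set lessThan_empty_iff)

lemma eventually_integrable_emp_measure: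
  "eventually (\<lambda>t. \<forall>h :: _ \<Rightarrow> real. integrable (emp_measure \<mu> t) h) sequentially"
  using eventually_gt_at_top[of 0] by eventually_elim (auto intro: integrable_emp_measure)

lemma integral_emp_measure:
  "t > 0 \<Longrightarrow> integral\<^sup>L (emp_measure \<mu> t) (h :: _ \<Rightarrow> real) = (\<Sum>s<t. h (\<mu> s, \<mu> (Suc s))) / real t"
  unfolding emp_measure_def
  by (subst integral_map_pmf, subst integral_pmf_of_set) (auto simp: lessThan_empty_iff)

lemma set_integral_emp_measure_ell:
  assumes steps: "\<And>s. (\<mu> s, \<mu> (Suc s)) \<in> S_set M" and "M > 0"
    and weights: "\<And>s. \<pi> (\<mu> s) \<in> closed_simplex" and t: "t > 0"
  shows "set_lebesgue_integral (emp_measure \<mu> t) (S_set M) (ell \<pi>) = ln (rel_value \<pi> \<mu> t) / real t"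
proof -
  have "growth_factor \<pi> (\<mu> s) (\<mu> (Suc s)) > 0" for s
    using growth_factor_pos_S_set[of "\<mu> s" "\<mu> (Suc s)" M \<pi>, OF steps \<open>M > 0\<close> weights] .
  then show ?thesis
    using steps by (simp add: set_lebesgue_integral_def integral_emp_measure[OF t] ln_rel_value)
qed

theorem lemma4p9:
  fixes \<mu> :: "nat \<Rightarrow> real ^ 'n" and M :: real
    and P :: "((real ^ 'n) \<times> (real ^ 'n)) measure"
  assumes n2: "CARD('n) \<ge> 2"
    and mu_simplex: "\<forall>t. \<mu> t \<in> open_simplex"
    and M_pos: "M > 0"
    and mu_ratio: "\<forall>t i. 1 / M \<le> \<mu> (Suc t) $ i / \<mu> t $ i \<and> \<mu> (Suc t) $ i / \<mu> t $ i \<le> M"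
    and P_prob: "prob_space P"
    and P_borel: "sets P = sets borel"
    and P_on_S: "emeasure P (S_set M) = 1"
    and P_ac: "simplex_abs_cont P"
    and weak: "weak_conv_on (S_set M) (emp_measure \<mu>) P"
  shows "\<forall>\<pi>\<in>FG. \<exists>W.
           (\<lambda>t. ln (rel_value \<pi> \<mu> t) / real t) \<longlonglongrightarrow> W
         \<and> (\<lambda>t. set_lebesgue_integral (emp_measure \<mu> t) (S_set M) (ell \<pi>)) \<longlonglongrightarrow> W
         \<and> set_integrable (completion P) (S_set M) (ell \<pi>)
         \<and> W = set_lebesgue_integral (completion P) (S_set M) (ell \<pi>)"
proof
  fix \<pi> :: "real ^ 'n \<Rightarrow> real ^ 'n" assume "\<pi> \<in> FG"
  have "M \<ge> 1" using mu_ratio ratio_bounds_imp_ge_1[OF M_pos] by blast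
  with \<open>\<pi> \<in> FG\<close> obtain \<Phi> where gp: "generated_portfolio \<Phi> M \<pi>"
    by (rule FG_imp_generated_portfolio)
  then interpret generated_portfolio \<Phi> M \<pi> .
  have steps: "(\<mu> s, \<mu> (Suc s)) \<in> S_set M" for s using mu_simplex mu_ratio by (simp add: S_set_def)
  note limit = weak_conv_on_AE_continuous[OF weak S_set_borel P_borel
      prob_space.finite_measure[OF P_prob] abs_ell_le_ln_M[where \<pi> = \<pi>, OF _ M_pos weights]
      AE_continuous_ell[OF gp P_borel P_ac] eventually_integrable_emp_measure]
  have "eventually (\<lambda>t. set_lebesgue_integral (emp_measure \<mu> t) (S_set M) (ell \<pi>)
      = ln (rel_value \<pi> \<mu> t) / real t) sequentially"
    using eventually_gt_at_top[of 0]
    by eventually_elim (rule set_integral_emp_measure_ell[where \<pi> = \<pi> and \<mu> = \<mu>,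
          OF steps M_pos weights[OF mu_simplex[rule_format]]])
  with limit(2) have "(\<lambda>t. ln (rel_value \<pi> \<mu> t) / real t)
      \<longlonglongrightarrow> set_lebesgue_integral (completion P) (S_set M) (ell \<pi>)"
    by (rule Lim_transform_eventually)
  with limit show "\<exists>W. (\<lambda>t. ln (rel_value \<pi> \<mu> t) / real t) \<longlonglongrightarrow> W
      \<and> (\<lambda>t. set_lebesgue_integral (emp_measure \<mu> t) (S_set M) (ell \<pi>)) \<longlonglongrightarrow> W
      \<and> set_integrable (completion P) (S_set M) (ell \<pi>)
      \<and> W = set_lebesgue_integral (completion P) (S_set M) (ell \<pi>)"
    by blast
qed

end
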